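(* In the setting below, let $g,\tilde g\in G$, $y=\varphi_{g^{-1}}(y_0)$, $\tilde y=\varphi_{\tilde g^{-1}}(y_0)$ and $e_g=\Phi_g(\tilde g^{-1})$. Then $V^y(y,\tilde y)=V^e(e_g)$, and the element $\zeta_e\in\mathfrak g$ defined by $\langle\langle\zeta_e,\xi\rangle\rangle=d_{e_g}V^e\big(T_I\Phi_{e_g}\xi\big)$ for all $\xi\in\mathfrak g$ satisfies, for all $\xi\in\mathfrak g$, $$\langle\langle\zeta_e,\xi\rangle\rangle=\frac{d}{ds}\Big|_{s=0}V^y\big(\varphi_{\tilde g^{-1}\exp(s\xi)}(y_0),\,y\big)\quad\text{(left observed system)},$$ $$\langle\langle\zeta_e,\xi\rangle\rangle=\frac{d}{ds}\Big|_{s=0}V^y\big(\varphi_{\exp(s\xi)\tilde g^{-1}}(y_0),\,y\big)\quad\text{(right observed system)}.$$ In particular $\zeta_e$ depends only on $\tilde g$ and the measurement $y$ (and not otherwise on $g$).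
   Context: $G$ is a Lie group with identity $I$, Lie algebra $\mathfrak g$, exponential map $\exp$, and $\langle\langle\cdot,\cdot\rangle\rangle$ is an inner product on $\mathfrak g$. $\mathcal Y$ is a smooth manifold, $y_0\in\mathcal Y$ fixed. Two cases: a left observed system, where $\Phi_g(h)=gh$ and $\varphi:G\times\mathcal Y\to\mathcal Y$ is a smooth left action ($\varphi_a\circ\varphi_b=\varphi_{ab}$); and a right observed system, where $\Phi_g(h)=hg$ and $\varphi$ is a smooth right action ($\varphi_a\circ\varphi_b=\varphi_{ba}$). The system is $\dot g=T_I\Phi_g\cdot\zeta(t)$, $y=\varphi_{g^{-1}}(y_0)$, with $\zeta(t)\in\mathfrak g$ known. $V^y:\mathcal Y\times\mathcal Y\to\mathbb R$ is smooth, symmetric and $\varphi$-invariant: $V^y(\varphi_h(a),\varphi_h(b))=V^y(a,b)$ for all $h\in G$, $a,b\in\mathcal Y$. Define $V^e:G\to\mathbb R$ by $V^e(e)=V^y(\varphi_e(y_0),y_0)$. Thus $e_g=g\tilde g^{-1}$ in the left case and $e_g=\tilde g^{-1}g$ in the right case. *)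

theory Defs
  imports "HOL-Analysis.Analysis"
begin

text \<open>Model: the Lie group G is a set of points in a Euclidean space 'E with
 multiplication gmul, inverse ginv and identity I; the Lie algebra is a linear
 subspace lie of 'E (the tangent space at I) with exponential expG.
 The flag left selects the left observed system (True) or the right one (False).\<close>

definition Phi :: "bool \<Rightarrow> ('E \<Rightarrow> 'E \<Rightarrow> 'E) \<Rightarrow> 'E \<Rightarrow> 'E \<Rightarrow> 'E" where
  "Phi left gmul g h = (if left then gmul g h else gmul h g)"

definition Ve :: "('y \<Rightarrow> 'y \<Rightarrow> real) \<Rightarrow> ('E \<Rightarrow> 'y \<Rightarrow> 'y) \<Rightarrow> 'y \<Rightarrow> 'E \<Rightarrow> real" where
  "Ve Vy phi y0 e = Vy (phi e y0) y0"

end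

theory Submission
  imports Defs
begin

text \<open>Acting with g on both arguments of the invariant cost Vy sends the measurement
  y = phi(g^-1, y0) back to y0 and an estimate phi(b, y0) to phi(Phi_g(b), y0); hence
  Vy(phi(b, y0), y) = Ve(Phi_g(b)). Taking b = Phi_(gt^-1)(a) turns this into Ve(Phi_e(a)),
  where e = Phi_g(gt^-1). Then a = I gives the first claim, and differentiating along
  a = exp(s xi) by the chain rule gives DV(DPhi xi) = ip zeta xi.\<close>

lemma Phi_assoc:
  assumes "\<And>a b c. a \<in> G \<Longrightarrow> b \<in> G \<Longrightarrow> c \<in> G \<Longrightarrow> gmul (gmul a b) c = gmul a (gmul b c)"
    and "a \<in> G" "b \<in> G" "c \<in> G"
  shows "Phi left gmul (Phi left gmul a b) c = Phi left gmul a (Phi left gmul b c)"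
  using assms by (simp add: Phi_def)

lemma has_real_derivative_along_curve:
  fixes E :: "real \<Rightarrow> 'a::real_normed_vector" and F :: "'a \<Rightarrow> 'b::real_normed_vector"
    and V :: "'b \<Rightarrow> real"
  assumes E: "(E has_vector_derivative \<xi>) (at 0)" and E_range: "range E \<subseteq> S"
    and F_maps: "F ` S \<subseteq> T"
    and F: "(F has_derivative DF) (at (E 0) within S)"
    and V: "(V has_derivative DV) (at (F (E 0)) within T)"
  shows "((\<lambda>s. V (F (E s))) has_real_derivative DV (DF \<xi>)) (at 0)"
proof -
  have "(E has_derivative (\<lambda>s. s *\<^sub>R \<xi>)) (at 0)"
    using E unfolding has_vector_derivative_def .
  moreover have "(F has_derivative DF) (at (E 0) within range E)"
    using has_derivative_subset[OF F E_range] .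
  ultimately have FE: "((F \<circ> E) has_derivative (\<lambda>s. DF (s *\<^sub>R \<xi>))) (at 0)"
    using diff_chain_within[of E _ 0 UNIV F DF] by (simp add: comp_def)
  have "range (F \<circ> E) \<subseteq> T" using E_range F_maps by auto
  then have "(V has_derivative DV) (at ((F \<circ> E) 0) within range (F \<circ> E))"
    using has_derivative_subset[OF V] by simp
  with FE have "((V \<circ> (F \<circ> E)) has_derivative (\<lambda>s. DV (DF (s *\<^sub>R \<xi>)))) (at 0)"
    using diff_chain_within[of "F \<circ> E" _ 0 UNIV V DV] by (simp add: comp_def)
  moreover have "linear DF" "linear DV"
    using F V by (blast dest: has_derivative_linear)+
  ultimately show ?thesis
    by (simp add: has_field_derivative_def linear_scale comp_def mult.commute[of _ "DV (DF \<xi>)"])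
qed

lemma invariant_cost_eq_Ve:
  assumes act_comp: "\<And>a b y. a \<in> G \<Longrightarrow> b \<in> G \<Longrightarrow> y \<in> Y \<Longrightarrow>
        phi a (phi b y) = (if left then phi (gmul a b) y else phi (gmul b a) y)"
    and Vy_inv: "\<And>h a b. h \<in> G \<Longrightarrow> a \<in> Y \<Longrightarrow> b \<in> Y \<Longrightarrow> Vy (phi h a) (phi h b) = Vy a b"
    and act_in: "\<And>a y. a \<in> G \<Longrightarrow> y \<in> Y \<Longrightarrow> phi a y \<in> Y"
    and act_id: "phi I y0 = y0"
    and g_inv: "Phi left gmul g h = I"
    and g: "g \<in> G" and h: "h \<in> G" and b: "b \<in> G" and y0: "y0 \<in> Y"
  shows "Vy (phi b y0) (phi h y0) = Ve Vy phi y0 (Phi left gmul g b)"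
proof -
  have phi_Phi: "phi a (phi c y0) = phi (Phi left gmul a c) y0" if "a \<in> G" "c \<in> G" for a c
    using act_comp[OF that y0] by (simp add: Phi_def)
  have "Vy (phi b y0) (phi h y0) = Vy (phi g (phi b y0)) (phi g (phi h y0))"
    using Vy_inv act_in g h b y0 by simp
  also have "\<dots> = Ve Vy phi y0 (Phi left gmul g b)"
    using phi_Phi g h b g_inv act_id by (simp add: Ve_def)
  finally show ?thesis .
qed

theorem mainTheorem6:
  fixes left :: bool
    and G :: "'E::euclidean_space set"
    and gmul :: "'E \<Rightarrow> 'E \<Rightarrow> 'E" and ginv :: "'E \<Rightarrow> 'E" and I :: 'E
    and lie :: "'E set" and expG :: "'E \<Rightarrow> 'E"
    and ip :: "'E \<Rightarrow> 'E \<Rightarrow> real"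
    and Y :: "'y set" and phi :: "'E \<Rightarrow> 'y \<Rightarrow> 'y" and y0 :: 'y
    and Vy :: "'y \<Rightarrow> 'y \<Rightarrow> real"
    and g gt :: 'E
    and DV :: "'E \<Rightarrow> real" and DPhi :: "'E \<Rightarrow> 'E" and zeta :: 'E
  assumes grp_I: "I \<in> G"
    and grp_mult: "\<And>a b. a \<in> G \<Longrightarrow> b \<in> G \<Longrightarrow> gmul a b \<in> G"
    and grp_inv: "\<And>a. a \<in> G \<Longrightarrow> ginv a \<in> G"
    and grp_assoc: "\<And>a b c. a \<in> G \<Longrightarrow> b \<in> G \<Longrightarrow> c \<in> G \<Longrightarrow> gmul (gmul a b) c = gmul a (gmul b c)"
    and grp_idl: "\<And>a. a \<in> G \<Longrightarrow> gmul I a = a"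
    and grp_idr: "\<And>a. a \<in> G \<Longrightarrow> gmul a I = a"
    and grp_invl: "\<And>a. a \<in> G \<Longrightarrow> gmul (ginv a) a = I"
    and grp_invr: "\<And>a. a \<in> G \<Longrightarrow> gmul a (ginv a) = I"
    and lie_subspace: "subspace lie"
    and exp_in: "\<And>\<xi> s. \<xi> \<in> lie \<Longrightarrow> expG (s *\<^sub>R \<xi>) \<in> G"
    and exp_zero: "expG 0 = I"
    and exp_deriv: "\<And>\<xi>. \<xi> \<in> lie \<Longrightarrow> ((\<lambda>s. expG (s *\<^sub>R \<xi>)) has_vector_derivative \<xi>) (at 0)"
    and ip_sym: "\<And>a b. a \<in> lie \<Longrightarrow> b \<in> lie \<Longrightarrow> ip a b = ip b a"
    and ip_add: "\<And>a b c. a \<in> lie \<Longrightarrow> b \<in> lie \<Longrightarrow> c \<in> lie \<Longrightarrow> ip (a + b) c = ip a c + ip b c"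
    and ip_scale: "\<And>r a b. a \<in> lie \<Longrightarrow> b \<in> lie \<Longrightarrow> ip (r *\<^sub>R a) b = r * ip a b"
    and ip_pos: "\<And>a. a \<in> lie \<Longrightarrow> a \<noteq> 0 \<Longrightarrow> ip a a > 0"
    and y0_in: "y0 \<in> Y"
    and act_in: "\<And>a y. a \<in> G \<Longrightarrow> y \<in> Y \<Longrightarrow> phi a y \<in> Y"
    and act_id: "\<And>y. y \<in> Y \<Longrightarrow> phi I y = y"
    and act_comp: "\<And>a b y. a \<in> G \<Longrightarrow> b \<in> G \<Longrightarrow> y \<in> Y \<Longrightarrow>
        phi a (phi b y) = (if left then phi (gmul a b) y else phi (gmul b a) y)"
    and Vy_sym: "\<And>a b. a \<in> Y \<Longrightarrow> b \<in> Y \<Longrightarrow> Vy a b = Vy b a"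
    and Vy_inv: "\<And>h a b. h \<in> G \<Longrightarrow> a \<in> Y \<Longrightarrow> b \<in> Y \<Longrightarrow> Vy (phi h a) (phi h b) = Vy a b"
    and g_in: "g \<in> G" and gt_in: "gt \<in> G"
    and DPhi: "(Phi left gmul (Phi left gmul g (ginv gt)) has_derivative DPhi) (at I within G)"
    and DV: "(Ve Vy phi y0 has_derivative DV) (at (Phi left gmul g (ginv gt)) within G)"
    and zeta_in: "zeta \<in> lie"
    and zeta_def: "\<And>\<xi>. \<xi> \<in> lie \<Longrightarrow> ip zeta \<xi> = DV (DPhi \<xi>)"
  shows "Vy (phi (ginv g) y0) (phi (ginv gt) y0) = Ve Vy phi y0 (Phi left gmul g (ginv gt))
    \<and> (\<forall>\<xi>\<in>lie.
        ((\<lambda>s. Vy (phi (if left then gmul (ginv gt) (expG (s *\<^sub>R \<xi>))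
                                else gmul (expG (s *\<^sub>R \<xi>)) (ginv gt)) y0)
                   (phi (ginv g) y0))
          has_real_derivative ip zeta \<xi>) (at 0))"
proof -
  define e where "e = Phi left gmul g (ginv gt)"
  have ginv_in: "ginv g \<in> G" "ginv gt \<in> G" using grp_inv g_in gt_in by auto
  have e_in: "e \<in> G" unfolding e_def Phi_def using grp_mult ginv_in g_in by auto
  have cost_translate: "Vy (phi b y0) (phi (ginv g) y0) = Ve Vy phi y0 (Phi left gmul g b)"
    if "b \<in> G" for b
    by (rule invariant_cost_eq_Ve[where G = G and Y = Y and g = g])
      (use act_comp Vy_inv act_in act_id y0_in grp_invl grp_invr g_in ginv_in that
        in \<open>auto simp: Phi_def\<close>)
  have cost_eq_error_cost: "Vy (phi (Phi left gmul (ginv gt) a) y0) (phi (ginv g) y0) = Ve Vy phi y0 (Phi left gmul e a)"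
    if "a \<in> G" for a
  proof -
    have "Phi left gmul (ginv gt) a \<in> G" using grp_mult ginv_in(2) that by (simp add: Phi_def)
    moreover have "Phi left gmul e a = Phi left gmul g (Phi left gmul (ginv gt) a)"
      unfolding e_def using Phi_assoc[OF grp_assoc g_in ginv_in(2) that] .
    ultimately show ?thesis using cost_translate by simp
  qed
  have "Vy (phi (ginv g) y0) (phi (ginv gt) y0) = Ve Vy phi y0 e"
    using Vy_sym act_in ginv_in y0_in cost_translate[OF ginv_in(2)] unfolding e_def by auto
  moreover have "((\<lambda>s. Vy (phi (Phi left gmul (ginv gt) (expG (s *\<^sub>R \<xi>))) y0) (phi (ginv g) y0))
      has_real_derivative ip zeta \<xi>) (at 0)" if \<xi>: "\<xi> \<in> lie" for \<xi>
  proof -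
    have e_unit: "Phi left gmul e (expG (0 *\<^sub>R \<xi>)) = e"
      using exp_zero grp_idl grp_idr e_in by (simp add: Phi_def)
    have maps: "Phi left gmul e ` G \<subseteq> G"
      using grp_mult e_in by (auto simp: Phi_def)
    have "((\<lambda>s. Ve Vy phi y0 (Phi left gmul e (expG (s *\<^sub>R \<xi>))))
        has_real_derivative DV (DPhi \<xi>)) (at 0)"
      by (rule has_real_derivative_along_curve[OF exp_deriv[OF \<xi>] _ maps])
        (use exp_in[OF \<xi>] exp_zero DPhi DV e_unit in \<open>auto simp: e_def\<close>)
    then show ?thesis using cost_eq_error_cost exp_in[OF \<xi>] zeta_def[OF \<xi>] by simp
  qed
  ultimately show ?thesis unfolding e_def Phi_def by simp
qed

end
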